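(* Let $s\ge 1$, $q=4^{2s}$, and let $\theta$ be the automorphism of $F_q$ given by $\theta(a)=a^{4^s}$. Let $n$ be an even positive integer and let $C$ be a skew cyclic code of length $n$ over $F_q$ with respect to $\theta$. If $C$ is a reversible DNA code, then so is its dual code $C^\perp$.
   Context: $F_q[x;\theta]$ is the skew polynomial ring with multiplication determined by $xa=\theta(a)x$. A skew cyclic code of length $n$ is a linear code $C\subseteq F_q^n$ such that $(\theta(c_{n-1}),\theta(c_0),\ldots,\theta(c_{n-2}))\in C$ whenever $(c_0,\ldots,c_{n-1})\in C$. $C^\perp$ is the dual with respect to the standard inner product $\sum_i u_iv_i$ on $F_q^n$. DNA correspondence: there is a fixed bijection $\tau:F_{4^{2s}}\to\{A,T,G,C\}^{2s}$ such that for every $\beta$, $\tau(\beta^{4^s})$ is the reverse of the string $\tau(\beta)$; it extends to $\phi:F_q^n\to\{A,T,G,C\}^{2sn}$ by concatenation, $\phi(c_0,\ldots,c_{n-1})=(\tau(c_0),\ldots,\tau(c_{n-1}))$. A code $C\subseteq F_q^n$ is a reversible DNA code if the reverse string $\phi(c)^r$ lies in $\phi(C)$ for all $c\in C$; equivalently, $(\theta(c_{n-1}),\ldots,\theta(c_1),\theta(c_0))\in C$ for every $(c_0,\ldots,c_{n-1})\in C$. *)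

theory Defs
  imports Main
begin

definition linear_code :: "nat \<Rightarrow> 'a::field list set \<Rightarrow> bool" where
  "linear_code n C \<longleftrightarrow>
     C \<subseteq> {v. length v = n} \<and> replicate n 0 \<in> C \<and>
     (\<forall>u\<in>C. \<forall>v\<in>C. map2 (+) u v \<in> C) \<and>
     (\<forall>a. \<forall>u\<in>C. map (\<lambda>x. a * x) u \<in> C)"

definition skew_cyclic :: "('a::field \<Rightarrow> 'a) \<Rightarrow> nat \<Rightarrow> 'a list set \<Rightarrow> bool" where
  "skew_cyclic \<theta> n C \<longleftrightarrow> linear_code n C \<and>
     (\<forall>c\<in>C. map \<theta> (last c # butlast c) \<in> C)"

definition dual_code :: "nat \<Rightarrow> 'a::field list set \<Rightarrow> 'a list set" where
  "dual_code n C = {u. length u = n \<and> (\<forall>c\<in>C. (\<Sum>i<n. u ! i * c ! i) = 0)}"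

datatype nucleotide = Ade | Thy | Gua | Cyt

definition dna_phi :: "('a \<Rightarrow> nucleotide list) \<Rightarrow> 'a list \<Rightarrow> nucleotide list" where
  "dna_phi \<tau> c = concat (map \<tau> c)"

definition reversible_dna :: "('a \<Rightarrow> nucleotide list) \<Rightarrow> 'a list set \<Rightarrow> bool" where
  "reversible_dna \<tau> C \<longleftrightarrow> (\<forall>c\<in>C. rev (dna_phi \<tau> c) \<in> dna_phi \<tau> ` C)"

end

theory Submission
  imports Defs "HOL-Number_Theory.Residues"
begin

text \<open>
  Since \<open>q = 4^(2s)\<close> is a power of 2, the map \<open>\<theta>(a) = a^(4^s)\<close> is an additive and
  multiplicative involution of \<open>F_q\<close>. Because \<open>\<tau> \<circ> \<theta> = rev \<circ> \<tau>\<close> and \<open>\<phi>\<close> is injective, a code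
  is reversible DNA exactly when it is closed under \<open>c \<mapsto> \<theta>(rev c)\<close>. For such a code and
  \<open>u \<in> C\<^sup>\<perp>\<close>, reindexing the inner product by \<open>i \<mapsto> n - 1 - i\<close> gives
  \<open>\<langle>\<theta>(rev u), c\<rangle> = \<theta>\<langle>u, \<theta>(rev c)\<rangle> = 0\<close>, so \<open>C\<^sup>\<perp>\<close> is closed under the same map.
\<close>

lemma power_two_power_add_char_two:
  fixes a b :: "'a::comm_ring_1"
  assumes "(2::'a) = 0"
  shows "(a + b) ^ (2 ^ k) = a ^ (2 ^ k) + b ^ (2 ^ k)"
proof (induction k)
  case 0
  then show ?case by simp
next
  case (Suc k)
  have square_add: "(x + y) ^ 2 = x ^ 2 + y ^ 2" for x y :: 'a
  proof -
    have "(x + y) ^ 2 = x ^ 2 + y ^ 2 + 2 * x * y"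
      by (simp add: power2_eq_square algebra_simps)
    then show ?thesis using assms by simp
  qed
  have "(a + b) ^ (2 ^ Suc k) = ((a + b) ^ (2 ^ k)) ^ 2"
    by (simp add: power_mult[symmetric] mult.commute)
  also have "\<dots> = (a ^ (2 ^ k)) ^ 2 + (b ^ (2 ^ k)) ^ 2"
    using Suc square_add by simp
  also have "\<dots> = a ^ (2 ^ Suc k) + b ^ (2 ^ Suc k)"
    by (simp add: power_mult[symmetric] mult.commute)
  finally show ?case .
qed

lemma two_eq_zero_if_card_power_two:
  assumes "card (UNIV :: 'a::{finite,field} set) = 2 ^ m"
  shows "(2::'a) = 0"
proof -
  have prime_char: "prime CHAR('a)"
    using prime_CHAR_semidom[OF finite_imp_CHAR_pos[where 'a='a]] by simp
  have "CHAR('a) dvd 2 ^ m"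
    using CHAR_dvd_CARD[where 'a='a] assms by simp
  then have "CHAR('a) dvd 2"
    using prime_char prime_dvd_power by blast
  then have "CHAR('a) = 2"
    using prime_char two_is_prime_nat primes_dvd_imp_eq by blast
  then show ?thesis
    using of_nat_CHAR[where 'a='a] by simp
qed

text \<open>Multiplication by a nonzero \<open>x\<close> permutes the nonzero elements, so \<open>x^(q-1) = 1\<close>.\<close>

lemma power_card_eq_self:
  fixes x :: "'a::{finite,field}"
  shows "x ^ card (UNIV :: 'a set) = x"
proof (cases "x = 0")
  case True
  then show ?thesis
    using finite_UNIV_card_ge_0[where 'a='a] by simp
next
  case False
  let ?U = "UNIV - {0} :: 'a set"
  have "x ^ card ?U * (\<Prod>y\<in>?U. y) = (\<Prod>y\<in>?U. x * y)"
    by (simp add: prod.distrib)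
  also have "\<dots> = (\<Prod>y\<in>?U. y)"
    by (rule prod.reindex_bij_witness[of _ "\<lambda>y. y / x" "\<lambda>y. x * y"]) (use False in auto)
  finally have "x ^ card ?U = 1"
    by simp
  moreover have "card (UNIV :: 'a set) = Suc (card ?U)"
    using finite_UNIV_card_ge_0[where 'a='a] by simp
  ultimately show ?thesis
    by (metis power_Suc mult_1_right)
qed

lemma length_dna_phi:
  assumes "\<And>x. length (\<tau> x) = k"
  shows "length (dna_phi \<tau> c) = k * length c"
  using assms by (induction c) (simp_all add: dna_phi_def)

lemma inj_dna_phi:
  assumes "inj \<tau>" and "\<And>x. length (\<tau> x) = k" and "k > 0"
  shows "inj (dna_phi \<tau>)"
proof (rule injI)
  fix xs ys
  assume eq: "dna_phi \<tau> xs = dna_phi \<tau> ys"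
  then have "length xs = length ys"
    using length_dna_phi[of \<tau> k, OF assms(2)] assms(3) by (metis mult_left_cancel neq0_conv)
  then show "xs = ys"
    using eq
  proof (induction xs arbitrary: ys)
    case Nil
    then show ?case by simp
  next
    case (Cons x xs)
    then obtain y ys' where ys: "ys = y # ys'"
      by (cases ys) auto
    from Cons.prems ys have "\<tau> x @ dna_phi \<tau> xs = \<tau> y @ dna_phi \<tau> ys'"
      by (simp add: dna_phi_def)
    then have "\<tau> x = \<tau> y" and "dna_phi \<tau> xs = dna_phi \<tau> ys'"
      using assms(2) by (simp_all add: append_eq_append_conv)
    then show ?case
      using Cons.IH Cons.prems(1) ys injD[OF assms(1)] by auto
  qed
qed

definition skew_reverse :: "('a \<Rightarrow> 'a) \<Rightarrow> 'a list \<Rightarrow> 'a list" where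
  "skew_reverse \<theta> c = map \<theta> (rev c)"

lemma rev_dna_phi:
  assumes "\<And>b. \<tau> (\<theta> b) = rev (\<tau> b)"
  shows "rev (dna_phi \<tau> c) = dna_phi \<tau> (skew_reverse \<theta> c)"
  by (simp add: dna_phi_def skew_reverse_def rev_concat rev_map comp_def assms)

lemma reversible_dna_iff_skew_reverse_closed:
  assumes "inj (dna_phi \<tau>)" and "\<And>b. \<tau> (\<theta> b) = rev (\<tau> b)"
  shows "reversible_dna \<tau> C \<longleftrightarrow> (\<forall>c\<in>C. skew_reverse \<theta> c \<in> C)"
  using inj_image_mem_iff[OF assms(1)]
  by (simp add: reversible_dna_def rev_dna_phi[where \<tau> = \<tau> and \<theta> = \<theta>, OF assms(2)])

lemma dual_code_skew_reverse_closed: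
  fixes \<theta> :: "'a::field \<Rightarrow> 'a"
  assumes add: "\<And>a b. \<theta> (a + b) = \<theta> a + \<theta> b"
    and mult: "\<And>a b. \<theta> (a * b) = \<theta> a * \<theta> b"
    and involutive: "\<And>a. \<theta> (\<theta> a) = a"
    and lengths: "C \<subseteq> {v. length v = n}"
    and closed: "\<forall>c\<in>C. skew_reverse \<theta> c \<in> C"
    and u: "u \<in> dual_code n C"
  shows "skew_reverse \<theta> u \<in> dual_code n C"
proof -
  have zero: "\<theta> 0 = 0"
    using add[of 0 0] by (metis add_cancel_right_right add_0)
  have sum: "\<theta> (\<Sum>i<m. f i) = (\<Sum>i<m. \<theta> (f i))" for m and f :: "nat \<Rightarrow> 'a"
    by (induction m) (simp_all add: zero add)
  have "(\<Sum>i<n. skew_reverse \<theta> u ! i * c ! i) = 0" if c: "c \<in> C" for c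
  proof -
    have "length c = n" and "length u = n"
      using c lengths u by (auto simp: dual_code_def)
    have "0 = \<theta> (\<Sum>i<n. u ! i * skew_reverse \<theta> c ! i)"
      using u closed c zero by (simp add: dual_code_def)
    also have "\<dots> = (\<Sum>i<n. \<theta> (u ! i) * c ! (n - Suc i))"
      using \<open>length c = n\<close> by (simp add: sum mult skew_reverse_def rev_nth involutive)
    also have "\<dots> = (\<Sum>i<n. \<theta> (u ! (n - Suc i)) * c ! i)"
      by (rule sum.reindex_bij_witness[of _ "\<lambda>i. n - Suc i" "\<lambda>i. n - Suc i"]) auto
    also have "\<dots> = (\<Sum>i<n. skew_reverse \<theta> u ! i * c ! i)"
      using \<open>length u = n\<close> by (intro sum.cong) (auto simp: skew_reverse_def rev_nth)
    finally show ?thesis by simp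
  qed
  then show ?thesis
    using u by (simp add: dual_code_def skew_reverse_def)
qed

theorem corollary2:
  fixes s n :: nat
    and \<tau> :: "'a::{finite,field} \<Rightarrow> nucleotide list"
    and C :: "'a list set"
  assumes "s \<ge> 1"
    and "card (UNIV :: 'a set) = 4 ^ (2 * s)"
    and "bij_betw \<tau> UNIV {w. length w = 2 * s}"
    and "\<forall>\<beta>. \<tau> (\<beta> ^ (4 ^ s)) = rev (\<tau> \<beta>)"
    and "even n" and "n > 0"
    and "skew_cyclic (\<lambda>a. a ^ (4 ^ s)) n C"
    and "reversible_dna \<tau> C"
  shows "reversible_dna \<tau> (dual_code n C)"
proof -
  define \<theta> :: "'a \<Rightarrow> 'a" where "\<theta> a = a ^ (4 ^ s)" for a
  have four_power: "4 ^ k = (2::nat) ^ (2 * k)" for k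
    by (simp add: power_mult)
  have char_two: "(2::'a) = 0"
    using two_eq_zero_if_card_power_two assms(2) four_power by metis
  have add: "\<theta> (a + b) = \<theta> a + \<theta> b" for a b
    using power_two_power_add_char_two[OF char_two] by (simp add: \<theta>_def four_power)
  have mult: "\<theta> (a * b) = \<theta> a * \<theta> b" for a b
    by (simp add: \<theta>_def power_mult_distrib)
  have involutive: "\<theta> (\<theta> a) = a" for a
    using power_card_eq_self[of a] assms(2)
    by (simp add: \<theta>_def power_mult[symmetric] power_add[symmetric] mult_2)
  have "inj (dna_phi \<tau>)"
    using assms(1,3) by (intro inj_dna_phi[where k = "2 * s"]) (auto simp: bij_betw_def)
  moreover have "\<tau> (\<theta> b) = rev (\<tau> b)" for b
    using assms(4) by (simp add: \<theta>_def)
  ultimately have reversible_iff: "reversible_dna \<tau> D \<longleftrightarrow> (\<forall>c\<in>D. skew_reverse \<theta> c \<in> D)" for D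
    by (rule reversible_dna_iff_skew_reverse_closed)
  have lengths: "C \<subseteq> {v. length v = n}"
    using assms(7) by (simp add: skew_cyclic_def linear_code_def)
  have closed: "\<forall>c\<in>C. skew_reverse \<theta> c \<in> C"
    using assms(8) reversible_iff by blast
  show ?thesis
    using dual_code_skew_reverse_closed[OF add mult involutive lengths closed] reversible_iff
    by blast
qed

end
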